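(* Let $\Omega\subset\mathbb{R}^2$ be a bounded domain, $h>0$, and let $L^h:\mathbb{R}^{|\Omega^h|}\to\mathbb{R}^{|\Omega^h|}$ be the linear operator described in the context. Then $L^h$ is symmetric and positive semi-definite on $\mathbb{R}^{|\Omega^h|}$ (with respect to the Euclidean inner product), and $\ker(L^h)=\operatorname{Span}\{1_{\Omega^h}\}$, where $1_{\Omega^h}\equiv1$ on $\Omega^h$.
   Context: Grid: $x_i=ih$, $y_j=jh$, $x_{i\pm1/2}=(i\pm\frac12)h$; $C_{ij}=[x_{i-1/2},x_{i+1/2}]\times[y_{j-1/2},y_{j+1/2}]$, edges $E_{i+1/2,j}=\{x_{i+1/2}\}\times[y_{j-1/2},y_{j+1/2}]$, $E_{i,j+1/2}=[x_{i-1/2},x_{i+1/2}]\times\{y_{j+1/2}\}$. $\Omega^h=\{(x_i,y_j):C_{ij}\cap\Omega\ne\emptyset\}$. Heaviside: $H_{i+1/2,j}=\mathrm{length}(E_{i+1/2,j}\cap\Omega)/h$, $H_{i,j+1/2}=\mathrm{length}(E_{i,j+1/2}\cap\Omega)/h$. $(\operatorname{G}_xp)_{i+1/2,j}=(p_{i+1,j}-p_{ij})/h$, $(\operatorname{G}_yp)_{i,j+1/2}=(p_{i,j+1}-p_{ij})/h$; $(\operatorname{D}(u,v))_{ij}=(u_{i+1/2,j}-u_{i-1/2,j})/h+(v_{i,j+1/2}-v_{i,j-1/2})/h$; $(\operatorname{G}H)_{ij}=((H_{i+1/2,j}-H_{i-1/2,j})/h,(H_{i,j+1/2}-H_{i,j-1/2})/h)$.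 $\vec J^h_{ij}=(\tilde{\vec x}_{ij}-\vec c)\times(\operatorname{G}H)_{ij}$ (planar scalar cross product $a_1b_2-a_2b_1$), $\vec c\in\mathbb{R}^2$ fixed, $\tilde{\vec x}_{ij}=\frac12(\vec x+\vec y)$ if $\partial C_{ij}\cap\partial\Omega=\{\vec x,\vec y\}$ and $0$ if empty. Constants $\rho,m>0$, inertia $\mathbb{I}>0$. $(L^hp)_{ij}=-(\operatorname{D}(\frac H\rho\operatorname{G}p))_{ij}+(\operatorname{G}H)_{ij}\cdot\frac1m\sum_{k,l}p_{kl}(\operatorname{G}H)_{kl}h^2+\vec J^h_{ij}\mathbb{I}^{-1}\sum_{k,l}p_{kl}\vec J^h_{kl}h^2$ for $p:\Omega^h\to\mathbb{R}$ (sums over $\Omega^h$). *)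

theory Defs
  imports "HOL-Analysis.Analysis"
begin

text \<open>Points of the plane are pairs of reals; grid indices are pairs of integers.
  Edge values u_{i+1/2,j} are stored at index (i,j), v_{i,j+1/2} at index (i,j).\<close>

definition cell :: "real \<Rightarrow> int \<Rightarrow> int \<Rightarrow> (real \<times> real) set" where
  "cell h i j = {(real_of_int i - 1/2) * h .. (real_of_int i + 1/2) * h}
              \<times> {(real_of_int j - 1/2) * h .. (real_of_int j + 1/2) * h}"

definition OmegaH :: "(real \<times> real) set \<Rightarrow> real \<Rightarrow> (int \<times> int) set" where
  "OmegaH \<Omega> h = {(i, j). cell h i j \<inter> \<Omega> \<noteq> {}}"

definition Hx :: "(real \<times> real) set \<Rightarrow> real \<Rightarrow> int \<Rightarrow> int \<Rightarrow> real" where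
  "Hx \<Omega> h i j = measure lebesgue
      {t \<in> {(real_of_int j - 1/2) * h .. (real_of_int j + 1/2) * h}.
         ((real_of_int i + 1/2) * h, t) \<in> \<Omega>} / h"

definition Hy :: "(real \<times> real) set \<Rightarrow> real \<Rightarrow> int \<Rightarrow> int \<Rightarrow> real" where
  "Hy \<Omega> h i j = measure lebesgue
      {t \<in> {(real_of_int i - 1/2) * h .. (real_of_int i + 1/2) * h}.
         (t, (real_of_int j + 1/2) * h) \<in> \<Omega>} / h"

definition GH :: "(real \<times> real) set \<Rightarrow> real \<Rightarrow> int \<times> int \<Rightarrow> real \<times> real" where
  "GH \<Omega> h k = (case k of (i, j) \<Rightarrow>
      ((Hx \<Omega> h i j - Hx \<Omega> h (i - 1) j) / h, (Hy \<Omega> h i j - Hy \<Omega> h i (j - 1)) / h))"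

definition cross2 :: "real \<times> real \<Rightarrow> real \<times> real \<Rightarrow> real" where
  "cross2 a b = fst a * snd b - snd a * fst b"

definition dot2 :: "real \<times> real \<Rightarrow> real \<times> real \<Rightarrow> real" where
  "dot2 a b = fst a * fst b + snd a * snd b"

definition xtilde :: "(real \<times> real) set \<Rightarrow> real \<Rightarrow> int \<times> int \<Rightarrow> real \<times> real" where
  "xtilde \<Omega> h k = (case k of (i, j) \<Rightarrow>
      (let S = frontier (cell h i j) \<inter> frontier \<Omega> in
       if \<exists>x y. S = {x, y}
       then (case (SOME (x, y). S = {x, y}) of (x, y) \<Rightarrow> (1/2) *\<^sub>R (x + y))
       else 0))"

definition Jh :: "(real \<times> real) set \<Rightarrow> real \<Rightarrow> real \<times> real \<Rightarrow> int \<times> int \<Rightarrow> real" where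
  "Jh \<Omega> h c k = cross2 (xtilde \<Omega> h k - c) (GH \<Omega> h k)"

definition Gx :: "real \<Rightarrow> (int \<times> int \<Rightarrow> real) \<Rightarrow> int \<Rightarrow> int \<Rightarrow> real" where
  "Gx h p i j = (p (i + 1, j) - p (i, j)) / h"

definition Gy :: "real \<Rightarrow> (int \<times> int \<Rightarrow> real) \<Rightarrow> int \<Rightarrow> int \<Rightarrow> real" where
  "Gy h p i j = (p (i, j + 1) - p (i, j)) / h"

definition Dh :: "real \<Rightarrow> (int \<Rightarrow> int \<Rightarrow> real) \<Rightarrow> (int \<Rightarrow> int \<Rightarrow> real) \<Rightarrow> int \<times> int \<Rightarrow> real" where
  "Dh h u v k = (case k of (i, j) \<Rightarrow>
      (u i j - u (i - 1) j) / h + (v i j - v i (j - 1)) / h)"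

text \<open>The operator L^h acting on p : \<Omega>^h \<rightarrow> \<real>; p is extended by zero outside \<Omega>^h
  (values there never matter, since H vanishes on edges leaving \<Omega>^h).\<close>
definition Lh :: "(real \<times> real) set \<Rightarrow> real \<Rightarrow> real \<Rightarrow> real \<Rightarrow> real \<Rightarrow> real \<times> real
                   \<Rightarrow> (int \<times> int \<Rightarrow> real) \<Rightarrow> int \<times> int \<Rightarrow> real" where
  "Lh \<Omega> h \<rho> m II c p k =
     (let q = (\<lambda>l. if l \<in> OmegaH \<Omega> h then p l else 0) in
        - Dh h (\<lambda>i j. Hx \<Omega> h i j / \<rho> * Gx h q i j) (\<lambda>i j. Hy \<Omega> h i j / \<rho> * Gy h q i j) k
        + dot2 (GH \<Omega> h k) ((1 / m) *\<^sub>R (\<Sum>l\<in>OmegaH \<Omega> h. (q l * h^2) *\<^sub>R GH \<Omega> h l))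
        + Jh \<Omega> h c k * (1 / II) * (\<Sum>l\<in>OmegaH \<Omega> h. q l * Jh \<Omega> h c l * h^2))"

end

theory Submission
  imports Defs
begin

text \<open>
  Summing by parts, \<open>\<Sum>\<^sub>k (L\<^sup>h p)\<^sub>k q\<^sub>k\<close> is the weighted Dirichlet form \<open>\<Sum> H/\<rho> (G p)(G q)\<close> plus
  \<open>h\<^sup>2/m\<close> times the product of the net forces \<open>\<Sum> p (G H)\<close>, \<open>\<Sum> q (G H)\<close> plus \<open>h\<^sup>2/II\<close> times the
  product of the net torques \<open>\<Sum> p J\<^sup>h\<close>, \<open>\<Sum> q J\<^sup>h\<close>; so \<open>L\<^sup>h\<close> is symmetric and positive semi-definite.
  If the form vanishes at \<open>p\<close>, then \<open>p\<close> does not jump across any edge with \<open>H > 0\<close>, i.e. any edge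
  meeting the open set \<open>\<Omega>\<close>, and connectedness of \<open>\<Omega>\<close> makes \<open>p\<close> constant.

  Conversely, for constant \<open>p\<close> the Dirichlet part vanishes and the force and torque vanish because
  \<open>\<Sum> G H\<close> and \<open>\<Sum> J\<^sup>h\<close> telescope. For the torque this needs a per-cell identity: as
  \<open>\<partial>C \<inter> \<partial>\<Omega> \<subseteq> {x, y}\<close>, the part of \<open>\<partial>C\<close> inside \<open>\<Omega>\<close> is an arc from \<open>x\<close> to \<open>y\<close> (or all or
  nothing of \<open>\<partial>C\<close>), so integrating \<open>1\<^sub>\<Omega> d\<gamma>\<close> and \<open>1\<^sub>\<Omega> \<gamma>\<cdot>d\<gamma>\<close> around \<open>\<partial>C\<close> gives \<open>y - x\<close> and
  \<open>(|y|\<^sup>2 - |x|\<^sup>2)/2 = (x + y)/2 \<cdot> (y - x)\<close>. This turns \<open>x\<^sub>C \<times> (G H)\<^sub>C\<close>, with \<open>x\<^sub>C = (x + y)/2\<close>,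
  into a difference of first moments of \<open>\<Omega>\<close> along opposite edges of \<open>C\<close>, which telescopes as well.
\<close>

section \<open>The indicator of an open set along a closed curve\<close>

lemma membership_constant_off_frontier:
  fixes \<gamma> :: "real \<Rightarrow> 'a::topological_space"
  assumes "continuous_on {u<..<w} \<gamma>" and "\<And>s. s \<in> {u<..<w} \<Longrightarrow> \<gamma> s \<notin> frontier \<Omega>"
  shows "\<exists>c. \<forall>s\<in>{u<..<w}. (\<gamma> s \<in> \<Omega>) = c"
proof -
  have "connected (\<gamma> ` {u<..<w})"
    using assms(1) by (rule connected_continuous_image) simp
  moreover have "\<gamma> ` {u<..<w} \<inter> frontier \<Omega> = {}"
    using assms(2) by blast
  ultimately have "\<gamma> ` {u<..<w} \<inter> \<Omega> = {} \<or> \<gamma> ` {u<..<w} - \<Omega> = {}"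
    using connected_Int_frontier by blast
  then show ?thesis
    by blast
qed

lemma membership_at_closure_point:
  fixes \<gamma> :: "real \<Rightarrow> 'a::topological_space"
  assumes "continuous (at t) \<gamma>" and "open \<Omega>" and "\<gamma> t \<notin> frontier \<Omega>"
    and "t \<in> closure J" and "\<forall>s\<in>J. (\<gamma> s \<in> \<Omega>) = c"
  shows "c = (\<gamma> t \<in> \<Omega>)"
proof -
  define U where "U = (if \<gamma> t \<in> \<Omega> then \<Omega> else - closure \<Omega>)"
  have "open U" "\<gamma> t \<in> U"
    using assms(2,3) by (auto simp: U_def frontier_def interior_open)
  then obtain V where V: "open V" "t \<in> V" "\<forall>s\<in>V. \<gamma> s \<in> U"
    using assms(1) unfolding continuous_at_open by blast
  then have "J \<inter> V \<noteq> {}"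
    using assms(4) unfolding closure_iff_nhds_not_empty by blast
  then obtain s where s: "s \<in> J" "\<gamma> s \<in> U"
    using V(3) by blast
  show ?thesis
  proof (cases "\<gamma> t \<in> \<Omega>")
    case True
    then show ?thesis
      using s assms(5) by (simp add: U_def)
  next
    case False
    then show ?thesis
      using s assms(5) closure_subset[of \<Omega>] by (auto simp: U_def)
  qed
qed

lemma has_integral_indicator_constant_piece:
  fixes g :: "real \<Rightarrow> real"
  assumes "(g has_integral I) {u..w}" and "\<forall>s\<in>{u<..<w}. (\<gamma> s \<in> \<Omega>) = c"
  shows "((\<lambda>s. indicator {s. \<gamma> s \<in> \<Omega>} s * g s) has_integral (of_bool c * I)) {u..w}"
proof (rule has_integral_spike_finite[of "{u, w}"])
  show "((\<lambda>s. of_bool c * g s) has_integral (of_bool c * I)) {u..w}"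
    using assms(1) by (rule has_integral_mult_right)
qed (use assms(2) in \<open>auto simp: indicator_def\<close>)

lemma has_integral_indicator_three_pieces:
  fixes g G :: "real \<Rightarrow> real"
  assumes "0 \<le> t1" "t1 \<le> t2" "t2 \<le> L"
    and "\<And>u w. 0 \<le> u \<Longrightarrow> u \<le> w \<Longrightarrow> w \<le> L \<Longrightarrow> (g has_integral (G w - G u)) {u..w}"
    and "\<forall>s\<in>{0<..<t1}. (\<gamma> s \<in> \<Omega>) = c" "\<forall>s\<in>{t1<..<t2}. (\<gamma> s \<in> \<Omega>) = c'"
    and "\<forall>s\<in>{t2<..<L}. (\<gamma> s \<in> \<Omega>) = c''"
  shows "((\<lambda>s. indicator {s. \<gamma> s \<in> \<Omega>} s * g s) has_integral
           (of_bool c * (G t1 - G 0) + of_bool c' * (G t2 - G t1) + of_bool c'' * (G L - G t2))) {0..L}"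
proof -
  have "((\<lambda>s. indicator {s. \<gamma> s \<in> \<Omega>} s * g s) has_integral
           (of_bool c * (G t1 - G 0) + of_bool c' * (G t2 - G t1))) {0..t2}"
    using assms by (intro has_integral_combine[of 0 t1 t2] has_integral_indicator_constant_piece) auto
  then show ?thesis
    using assms by (intro has_integral_combine[of 0 t2 L] has_integral_indicator_constant_piece) auto
qed

lemma card_le_2_cases:
  fixes T :: "'a::linorder set"
  assumes "finite T" "card T \<le> 2"
  obtains "T = {}" | t where "T = {t}" | a b where "a < b" "T = {a, b}"
proof -
  consider "card T = 0" | "card T = 1" | "card T = 2"
    using assms(2) by linarith
  then show thesis
  proof cases
    case 3
    then obtain a b where "T = {a, b}" "a \<noteq> b"
      by (auto simp: card_2_iff)
    then show thesis
      using that(3)[of a b] that(3)[of b a] by (metis insert_commute linorder_neq_iff)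
  qed (use assms(1) that in \<open>auto simp: card_Suc_eq\<close>)
qed

lemma card_le_2_in_interval:
  fixes T :: "real set"
  assumes "finite T" "card T \<le> 2" "T \<subseteq> {a<..<b}" "a < b"
  obtains t1 t2 where "a < t1" "t1 \<le> t2" "t2 < b" "T \<subseteq> {t1, t2}" "t1 = t2 \<or> T = {t1, t2}"
  using assms(1,2)
proof (cases rule: card_le_2_cases)
  case 1
  then show thesis
    using that[of "(a + b) / 2" "(a + b) / 2"] assms(4) by auto
next
  case (2 t)
  then show thesis
    using that[of t t] assms(3) by auto
next
  case (3 t1 t2)
  then show thesis
    using that[of t1 t2] assms(3) by auto
qed

lemma closed_curve_frontier_crossings:
  fixes \<gamma> :: "real \<Rightarrow> 'a"
  assumes "0 < L" and inj: "inj_on \<gamma> {0..<L}" and "\<gamma> ` {0..L} \<subseteq> B"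
    and two_points: "B \<inter> F = {} \<or> (\<exists>x y. B \<inter> F = {x, y})"
  obtains t1 t2 where "0 < t1" "t1 \<le> t2" "t2 < L" "\<gamma> 0 \<notin> F" "\<forall>s\<in>{0<..<L} - {t1, t2}. \<gamma> s \<notin> F"
      "t1 = t2 \<or> B \<inter> F = {\<gamma> t1, \<gamma> t2}"
  | t where "0 < t" "t \<le> L" "\<forall>s\<in>{0<..<L} - {t}. \<gamma> s \<notin> F" "t = L \<or> B \<inter> F = {\<gamma> 0, \<gamma> t}"
proof -
  define T where "T = {s \<in> {0<..<L}. \<gamma> s \<in> B \<inter> F}"
  have off_T: "\<forall>s\<in>{0<..<L} - T. \<gamma> s \<notin> F"
    using assms(3) by (auto simp: T_def image_subset_iff)
  have inj_T: "inj_on \<gamma> T"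
    using inj by (rule inj_on_subset) (auto simp: T_def)
  have image_T: "\<gamma> ` T \<subseteq> B \<inter> F"
    by (auto simp: T_def)
  show thesis
  proof (cases "\<gamma> 0 \<in> F")
    case False
    have S: "finite (B \<inter> F)" "card (B \<inter> F) \<le> 2"
      using two_points by (auto simp: card_insert_if)
    have "finite T" "card T \<le> 2"
      using finite_imageD[OF finite_subset[OF image_T S(1)] inj_T] card_inj_on_le[OF inj_T image_T S(1)] S(2)
      by auto
    moreover have "T \<subseteq> {0<..<L}"
      by (auto simp: T_def)
    ultimately obtain t1 t2 where t: "0 < t1" "t1 \<le> t2" "t2 < L" "T \<subseteq> {t1, t2}" "t1 = t2 \<or> T = {t1, t2}"
      using card_le_2_in_interval assms(1) by blast
    have "B \<inter> F = {\<gamma> t1, \<gamma> t2}" if "T = {t1, t2}" "t1 \<noteq> t2"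
    proof -
      have sub: "{\<gamma> t1, \<gamma> t2} \<subseteq> B \<inter> F" and "card {\<gamma> t1, \<gamma> t2} = 2"
        using that image_T inj_T by (auto simp: inj_on_def)
      then show ?thesis
        using card_subset_eq[OF S(1) sub] card_mono[OF S(1) sub] S(2) by simp
    qed
    then show thesis
      using that(1)[of t1 t2] t False off_T by blast
  next
    case True
    then have "\<gamma> 0 \<in> B \<inter> F"
      using assms(1,3) by auto
    then obtain y where S: "B \<inter> F = {\<gamma> 0, y}"
      using two_points by (metis emptyE insertE insert_commute)
    have "\<gamma> 0 \<notin> \<gamma> ` T"
      using inj by (force simp: T_def inj_on_def)
    then have image_T': "\<gamma> ` T \<subseteq> {y}"
      using image_T unfolding S by (simp add: subset_insert)
    show thesis
    proof (cases "T = {}")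
      case True
      show thesis
        by (rule that(2)[of L]) (use off_T True assms(1) in auto)
    next
      case False
      then obtain t where t: "t \<in> T"
        by blast
      have "s = t" if "s \<in> T" for s
        using inj_onD[OF inj_T _ that t] image_T' that t by auto
      then have "T = {t}"
        using t by blast
      moreover have "\<gamma> t = y" "t \<in> {0<..<L}"
        using t image_T' by (auto simp: T_def)
      ultimately show thesis
        by (intro that(2)[of t]) (use off_T S in auto)
    qed
  qed
qed

text \<open>Between the at most two crossings of \<open>\<partial>\<Omega>\<close> the curve stays inside or outside \<open>\<Omega>\<close>, and it is
  in the same state just before and just after its start point unless that point is a crossing.\<close>

lemma closed_curve_indicator_integral:
  fixes \<gamma> :: "real \<Rightarrow> 'a::topological_space"
  assumes "0 < L" and cont: "\<And>s. continuous (at s) \<gamma>" and "open \<Omega>"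
    and closed: "\<gamma> 0 = \<gamma> L" and "inj_on \<gamma> {0..<L}" and "\<gamma> ` {0..L} \<subseteq> B"
    and "B \<inter> frontier \<Omega> = {} \<or> (\<exists>x y. B \<inter> frontier \<Omega> = {x, y})"
  obtains \<kappa> ta tb where "\<kappa> = 0 \<or> B \<inter> frontier \<Omega> = {\<gamma> ta, \<gamma> tb}"
    and "\<And>g G :: real \<Rightarrow> real.
           (\<And>u w. 0 \<le> u \<Longrightarrow> u \<le> w \<Longrightarrow> w \<le> L \<Longrightarrow> (g has_integral (G w - G u)) {u..w}) \<Longrightarrow>
           G 0 = G L \<Longrightarrow>
           ((\<lambda>s. indicator {s. \<gamma> s \<in> \<Omega>} s * g s) has_integral (\<kappa> * (G tb - G ta))) {0..L}"
proof -
  have piece: "\<exists>c. \<forall>s\<in>{u<..<w}. (\<gamma> s \<in> \<Omega>) = c"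
    if "0 \<le> u" "w \<le> L" "\<forall>s\<in>{u<..<w}. \<gamma> s \<notin> frontier \<Omega>" for u w
    using that cont by (intro membership_constant_off_frontier continuous_at_imp_continuous_on) auto
  have at_start: "c = (\<gamma> 0 \<in> \<Omega>)"
    if "\<gamma> 0 \<notin> frontier \<Omega>" "0 < w" "\<forall>s\<in>{0<..<w}. (\<gamma> s \<in> \<Omega>) = c" for w c
    by (rule membership_at_closure_point[OF cont assms(3) that(1) _ that(3)]) (use that(2) in simp)
  have at_end: "c = (\<gamma> 0 \<in> \<Omega>)"
    if "\<gamma> 0 \<notin> frontier \<Omega>" "u < L" "\<forall>s\<in>{u<..<L}. (\<gamma> s \<in> \<Omega>) = c" for u c
    using membership_at_closure_point[OF cont assms(3) _ _ that(3), of L] that closed by simp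
  from assms(1,5,6,7) show thesis
  proof (cases rule: closed_curve_frontier_crossings)
    case (1 t1 t2)
    obtain c0 c1 c2 where c0: "\<forall>s\<in>{0<..<t1}. (\<gamma> s \<in> \<Omega>) = c0"
      and c1: "\<forall>s\<in>{t1<..<t2}. (\<gamma> s \<in> \<Omega>) = c1" and c2: "\<forall>s\<in>{t2<..<L}. (\<gamma> s \<in> \<Omega>) = c2"
      using piece[of 0 t1] piece[of t1 t2] piece[of t2 L] 1 by auto
    have "c0 = c2"
      using at_start[OF _ _ c0] at_end[OF _ _ c2] 1 by simp
    show thesis
    proof (rule that[of "if t1 = t2 then 0 else of_bool c1 - of_bool c0" t1 t2])
      fix g G :: "real \<Rightarrow> real"
      assume "\<And>u w. 0 \<le> u \<Longrightarrow> u \<le> w \<Longrightarrow> w \<le> L \<Longrightarrow> (g has_integral (G w - G u)) {u..w}"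
        and "G 0 = G L"
      with has_integral_indicator_three_pieces[OF _ _ _ this(1) c0 c1 c2] 1 \<open>c0 = c2\<close>
      show "((\<lambda>s. indicator {s. \<gamma> s \<in> \<Omega>} s * g s) has_integral
              ((if t1 = t2 then 0 else of_bool c1 - of_bool c0) * (G t2 - G t1))) {0..L}"
        by (auto simp: algebra_simps)
    qed (use 1 in auto)
  next
    case (2 t)
    obtain c1 c2 where c1: "\<forall>s\<in>{0<..<t}. (\<gamma> s \<in> \<Omega>) = c1" and c2: "\<forall>s\<in>{t<..<L}. (\<gamma> s \<in> \<Omega>) = c2"
      using piece[of 0 t] piece[of t L] 2 by auto
    show thesis
    proof (rule that[of "if t = L then 0 else of_bool c1 - of_bool c2" 0 t])
      fix g G :: "real \<Rightarrow> real"
      assume "\<And>u w. 0 \<le> u \<Longrightarrow> u \<le> w \<Longrightarrow> w \<le> L \<Longrightarrow> (g has_integral (G w - G u)) {u..w}"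
        and "G 0 = G L"
      with has_integral_indicator_three_pieces[where c = True, OF _ _ _ this(1) _ c1 c2] 2
      show "((\<lambda>s. indicator {s. \<gamma> s \<in> \<Omega>} s * g s) has_integral
              ((if t = L then 0 else of_bool c1 - of_bool c2) * (G t - G 0))) {0..L}"
        by (auto simp: algebra_simps)
    qed (use 2 in auto)
  qed
qed

section \<open>The boundary loop of a cell\<close>

definition ramp :: "real \<Rightarrow> real \<Rightarrow> real" where
  "ramp h x = max 0 (min h x)"

definition ramp_slope :: "real \<Rightarrow> real \<Rightarrow> real" where
  "ramp_slope h x = (if 0 < x \<and> x < h then 1 else 0)"

lemma has_real_derivative_ramp_shift:
  assumes "0 < h" and "x - c \<noteq> 0" and "x - c \<noteq> h"
  shows "((\<lambda>s. ramp h (s - c)) has_real_derivative ramp_slope h (x - c)) (at x)"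
proof -
  consider "x - c < 0" | "0 < x - c" "x - c < h" | "h < x - c"
    using assms by linarith
  then show ?thesis
  proof cases
    case 1
    have "((\<lambda>s. 0) has_real_derivative 0) (at x)"
      by simp
    then have "((\<lambda>s. ramp h (s - c)) has_real_derivative 0) (at x)"
      by (rule has_field_derivative_transform_within_open[of _ _ _ "{..<c}"])
         (use 1 in \<open>auto simp: ramp_def\<close>)
    then show ?thesis
      using 1 by (simp add: ramp_slope_def)
  next
    case 2
    have "((\<lambda>s. s - c) has_real_derivative 1) (at x)"
      by (auto intro!: derivative_eq_intros)
    then have "((\<lambda>s. ramp h (s - c)) has_real_derivative 1) (at x)"
      by (rule has_field_derivative_transform_within_open[of _ _ _ "{c<..<c+h}"])
         (use 2 in \<open>auto simp: ramp_def\<close>)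
    then show ?thesis
      using 2 by (simp add: ramp_slope_def)
  next
    case 3
    have "((\<lambda>s. h) has_real_derivative 0) (at x)"
      by simp
    then have "((\<lambda>s. ramp h (s - c)) has_real_derivative 0) (at x)"
      by (rule has_field_derivative_transform_within_open[of _ _ _ "{c+h<..}"])
         (use 3 assms(1) in \<open>auto simp: ramp_def\<close>)
    then show ?thesis
      using 3 assms(1) by (simp add: ramp_slope_def)
  qed
qed

text \<open>The boundary of the cell \<open>[a1, a1 + h] \<times> [a2, a2 + h]\<close>, run counterclockwise at unit speed
  from the corner \<open>(a1, a2)\<close> during \<open>[0, 4h]\<close>.\<close>

definition square_loop :: "real \<Rightarrow> real \<Rightarrow> real \<Rightarrow> real \<Rightarrow> real \<times> real" where
  "square_loop a1 a2 h s =
     (a1 + ramp h s - ramp h (s - 2*h), a2 + ramp h (s - h) - ramp h (s - 3*h))"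

definition square_loop_velocity :: "real \<Rightarrow> real \<Rightarrow> real \<times> real" where
  "square_loop_velocity h s =
     (ramp_slope h s - ramp_slope h (s - 2*h), ramp_slope h (s - h) - ramp_slope h (s - 3*h))"

lemma continuous_square_loop: "continuous (at s) (square_loop a1 a2 h)"
  unfolding square_loop_def[abs_def] ramp_def by (intro continuous_intros)

lemma square_loop_fst_deriv:
  assumes "0 < h" "s \<notin> {0, h, 2*h, 3*h, 4*h}"
  shows "((\<lambda>s. fst (square_loop a1 a2 h s)) has_real_derivative fst (square_loop_velocity h s)) (at s)"
proof -
  have "((\<lambda>s. a1 + ramp h (s - 0) - ramp h (s - 2*h)) has_real_derivative
          0 + ramp_slope h (s - 0) - ramp_slope h (s - 2*h)) (at s)"
    using assms by (intro DERIV_diff DERIV_add DERIV_const has_real_derivative_ramp_shift) auto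
  then show ?thesis
    by (simp add: square_loop_def square_loop_velocity_def)
qed

lemma square_loop_snd_deriv:
  assumes "0 < h" "s \<notin> {0, h, 2*h, 3*h, 4*h}"
  shows "((\<lambda>s. snd (square_loop a1 a2 h s)) has_real_derivative snd (square_loop_velocity h s)) (at s)"
proof -
  have "((\<lambda>s. a2 + ramp h (s - h) - ramp h (s - 3*h)) has_real_derivative
          0 + ramp_slope h (s - h) - ramp_slope h (s - 3*h)) (at s)"
    using assms by (intro DERIV_diff DERIV_add DERIV_const has_real_derivative_ramp_shift) auto
  then show ?thesis
    by (simp add: square_loop_def square_loop_velocity_def)
qed

lemma square_loop_sqnorm_deriv:
  assumes "0 < h" "s \<notin> {0, h, 2*h, 3*h, 4*h}"
  shows "((\<lambda>s. norm (square_loop a1 a2 h s)^2 / 2) has_real_derivative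
           square_loop a1 a2 h s \<bullet> square_loop_velocity h s) (at s)"
  using square_loop_fst_deriv[OF assms] square_loop_snd_deriv[OF assms] unfolding power2_norm_eq_inner
  by (auto intro!: derivative_eq_intros simp: inner_prod_def)

lemma has_integral_primitive_off_finite:
  fixes G g :: "real \<Rightarrow> real"
  assumes "finite E" and "\<And>x. x \<notin> E \<Longrightarrow> (G has_real_derivative g x) (at x)"
    and "\<And>x. continuous (at x) G" and "u \<le> w"
  shows "(g has_integral (G w - G u)) {u..w}"
proof (rule fundamental_theorem_of_calculus_interior_strong[OF assms(1,4)])
  show "(G has_vector_derivative g x) (at x)" if "x \<in> {u<..<w} - E" for x
    using assms(2) that by (simp add: has_real_derivative_iff_has_vector_derivative)
  show "continuous_on {u..w} G"
    using assms(3) by (simp add: continuous_at_imp_continuous_on)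
qed

lemma square_loop_quarters:
  assumes "0 < h" "0 \<le> s" "s \<le> 4*h"
  shows "s \<le> h \<and> square_loop a1 a2 h s = (a1 + s, a2)
       \<or> h \<le> s \<and> s \<le> 2*h \<and> square_loop a1 a2 h s = (a1 + h, a2 + s - h)
       \<or> 2*h \<le> s \<and> s \<le> 3*h \<and> square_loop a1 a2 h s = (a1 + 3*h - s, a2 + h)
       \<or> 3*h \<le> s \<and> square_loop a1 a2 h s = (a1, a2 + 4*h - s)"
  using assms by (cases "s \<le> h"; cases "s \<le> 2*h"; cases "s \<le> 3*h")
    (auto simp: square_loop_def ramp_def max_def min_def)

lemma square_loop_on_open_quarters:
  assumes "0 < h"
  shows "s \<in> {0<..<h} \<Longrightarrow> square_loop a1 a2 h s = (a1 + s, a2) \<and> square_loop_velocity h s = (1, 0)"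
    and "s \<in> {h<..<2*h} \<Longrightarrow> square_loop a1 a2 h s = (a1 + h, a2 + s - h) \<and> square_loop_velocity h s = (0, 1)"
    and "s \<in> {2*h<..<3*h} \<Longrightarrow> square_loop a1 a2 h s = (a1 + 3*h - s, a2 + h) \<and> square_loop_velocity h s = (-1, 0)"
    and "s \<in> {3*h<..<4*h} \<Longrightarrow> square_loop a1 a2 h s = (a1, a2 + 4*h - s) \<and> square_loop_velocity h s = (0, -1)"
  using assms by (auto simp: square_loop_def square_loop_velocity_def ramp_def ramp_slope_def max_def min_def)

lemma inj_on_square_loop:
  assumes "0 < h"
  shows "inj_on (square_loop a1 a2 h) {0..<4*h}"
proof (rule inj_onI)
  fix s t
  assume "s \<in> {0..<4*h}" "t \<in> {0..<4*h}" "square_loop a1 a2 h s = square_loop a1 a2 h t"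
  with square_loop_quarters[OF assms, of s a1 a2] square_loop_quarters[OF assms, of t a1 a2]
  show "s = t"
    by auto
qed

lemma square_loop_closed: "0 < h \<Longrightarrow> square_loop a1 a2 h 0 = square_loop a1 a2 h (4*h)"
  by (simp add: square_loop_def ramp_def)

lemma frontier_box_real:
  fixes a b c d :: real
  shows "frontier ({a..b} \<times> {c..d}) = {a..b} \<times> {c..d} - {a<..<b} \<times> {c<..<d}"
  by (simp add: frontier_def closure_closed closed_Times interior_Times)

lemma square_loop_in_frontier:
  assumes "0 < h"
  shows "square_loop a1 a2 h ` {0..4*h} \<subseteq> frontier ({a1..a1+h} \<times> {a2..a2+h})"
proof
  fix z
  assume "z \<in> square_loop a1 a2 h ` {0..4*h}"
  then obtain s where s: "0 \<le> s" "s \<le> 4*h" "z = square_loop a1 a2 h s"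
    by auto
  show "z \<in> frontier ({a1..a1+h} \<times> {a2..a2+h})"
    using square_loop_quarters[OF assms s(1,2), of a1 a2] s assms unfolding frontier_box_real by auto
qed

lemma integral_eq_shifted_piece:
  fixes g f :: "real \<Rightarrow> real"
  assumes "g integrable_on {u..w}" and "\<forall>s\<in>{u<..<w}. g s = f (s + c)"
  shows "integral {u + c..w + c} f = integral {u..w} g"
proof -
  have "((f \<circ> (+) c) has_integral integral {u..w} g) {u..w}"
    by (rule has_integral_spike_finite[of "{u, w}" _ _ g])
       (use assms in \<open>auto simp: add.commute has_integral_integral\<close>)
  then show ?thesis
    by (simp add: has_integral_shift_Icc_real integral_unique)
qed

lemma integral_eq_reflected_piece:
  fixes g f :: "real \<Rightarrow> real"
  assumes "g integrable_on {u..w}" and "\<forall>s\<in>{u<..<w}. g s = f (c - s)"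
  shows "integral {c - w..c - u} f = integral {u..w} g"
proof -
  have "((\<lambda>s. (f \<circ> (+) c) (- s)) has_integral integral {u..w} g) {u..w}"
    by (rule has_integral_spike_finite[of "{u, w}" _ _ g])
       (use assms in \<open>auto simp: has_integral_integral\<close>)
  then have "((f \<circ> (+) c) has_integral integral {u..w} g) {-w..-u}"
    using has_integral_reflect_real[of "f \<circ> (+) c" _ "-u" "-w"] by simp
  then show ?thesis
    by (simp add: has_integral_shift_Icc_real integral_unique)
qed

lemma square_loop_line_integral:
  fixes f :: "real \<times> real \<Rightarrow> real \<times> real"
  assumes "0 < h"
    and "((\<lambda>s. f (square_loop a1 a2 h s) \<bullet> square_loop_velocity h s) has_integral I) {0..4*h}"
  shows "I = integral {a1..a1+h} (\<lambda>x. fst (f (x, a2))) + integral {a2..a2+h} (\<lambda>y. snd (f (a1 + h, y)))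
           - integral {a1..a1+h} (\<lambda>x. fst (f (x, a2 + h))) - integral {a2..a2+h} (\<lambda>y. snd (f (a1, y)))"
proof -
  define F where "F s = f (square_loop a1 a2 h s) \<bullet> square_loop_velocity h s" for s
  have F_on: "F integrable_on {u..w}" if "0 \<le> u" "u \<le> w" "w \<le> 4*h" for u w
    unfolding F_def
    by (rule integrable_subinterval_real[OF has_integral_integrable[OF assms(2)]]) (use that in auto)
  note quarter = square_loop_on_open_quarters[OF assms(1), of _ a1 a2]
  have halves: "integral {u..w} F = integral {u..(u + w) / 2} F + integral {(u + w) / 2..w} F"
    if "0 \<le> u" "u \<le> w" "w \<le> 4*h" for u w
    using that by (intro Henstock_Kurzweil_Integration.integral_combine[symmetric] F_on) auto
  have "I = integral {0..4*h} F"
    unfolding F_def using assms(2) by (rule integral_unique[symmetric])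
  then have split: "I = integral {0..h} F + integral {h..2*h} F + integral {2*h..3*h} F + integral {3*h..4*h} F"
    using halves[of 0 "4*h"] halves[of 0 "2*h"] halves[of "2*h" "4*h"] assms(1) by simp
  have bottom: "integral {0..h} F = integral {a1..a1+h} (\<lambda>x. fst (f (x, a2)))"
    using integral_eq_shifted_piece[OF F_on, of 0 h "\<lambda>x. fst (f (x, a2))" a1] quarter(1) assms(1)
    by (simp add: F_def inner_prod_def add.commute)
  have right: "integral {h..2*h} F = integral {a2..a2+h} (\<lambda>y. snd (f (a1 + h, y)))"
    using integral_eq_shifted_piece[OF F_on, of h "2*h" "\<lambda>y. snd (f (a1 + h, y))" "a2 - h"] quarter(2) assms(1)
    by (simp add: F_def inner_prod_def algebra_simps)
  have top: "integral {2*h..3*h} F = - integral {a1..a1+h} (\<lambda>x. fst (f (x, a2 + h)))"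
    using integral_eq_reflected_piece[OF F_on, of "2*h" "3*h" "\<lambda>x. - fst (f (x, a2 + h))" "a1 + 3*h"]
      quarter(3) assms(1)
    by (simp add: F_def inner_prod_def integral_neg algebra_simps)
  have left: "integral {3*h..4*h} F = - integral {a2..a2+h} (\<lambda>y. snd (f (a1, y)))"
    using integral_eq_reflected_piece[OF F_on, of "3*h" "4*h" "\<lambda>y. - snd (f (a1, y))" "a2 + 4*h"]
      quarter(4) assms(1)
    by (simp add: F_def inner_prod_def integral_neg algebra_simps)
  show ?thesis
    using split bottom right top left by simp
qed

lemma square_loop_indicator_line_integrals:
  fixes \<Omega> :: "(real \<times> real) set" and a1 a2 h :: real
  defines "B \<equiv> frontier ({a1..a1+h} \<times> {a2..a2+h})"
  assumes h: "0 < h" and "open \<Omega>"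
    and two_points: "B \<inter> frontier \<Omega> = {} \<or> (\<exists>x y. B \<inter> frontier \<Omega> = {x, y})"
  obtains \<kappa> ta tb where "\<kappa> = 0 \<or> B \<inter> frontier \<Omega> = {square_loop a1 a2 h ta, square_loop a1 a2 h tb}"
    and "\<And>f g G. (\<And>s. indicator {s. square_loop a1 a2 h s \<in> \<Omega>} s * g s
                         = f (square_loop a1 a2 h s) \<bullet> square_loop_velocity h s) \<Longrightarrow>
           (\<And>s. s \<notin> {0, h, 2*h, 3*h, 4*h} \<Longrightarrow> (G has_real_derivative g s) (at s)) \<Longrightarrow>
           (\<And>s. continuous (at s) G) \<Longrightarrow> G 0 = G (4*h) \<Longrightarrow>
           \<kappa> * (G tb - G ta) =
             integral {a1..a1+h} (\<lambda>x. fst (f (x, a2))) + integral {a2..a2+h} (\<lambda>y. snd (f (a1 + h, y)))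
             - integral {a1..a1+h} (\<lambda>x. fst (f (x, a2 + h))) - integral {a2..a2+h} (\<lambda>y. snd (f (a1, y)))"
proof -
  let ?\<gamma> = "square_loop a1 a2 h"
  obtain \<kappa> ta tb where \<kappa>: "\<kappa> = 0 \<or> B \<inter> frontier \<Omega> = {?\<gamma> ta, ?\<gamma> tb}"
    and loop: "\<And>g G :: real \<Rightarrow> real.
      (\<And>u w. 0 \<le> u \<Longrightarrow> u \<le> w \<Longrightarrow> w \<le> 4*h \<Longrightarrow> (g has_integral (G w - G u)) {u..w}) \<Longrightarrow>
      G 0 = G (4*h) \<Longrightarrow>
      ((\<lambda>s. indicator {s. ?\<gamma> s \<in> \<Omega>} s * g s) has_integral (\<kappa> * (G tb - G ta))) {0..4*h}"
  proof (rule closed_curve_indicator_integral[OF _ continuous_square_loop assms(3) square_loop_closed[OF h]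
        inj_on_square_loop[OF h] _ two_points])
    show "0 < 4*h"
      using h by simp
    show "square_loop a1 a2 h ` {0..4*h} \<subseteq> B"
      unfolding B_def by (rule square_loop_in_frontier[OF h])
  qed blast
  have corners: "finite {0, h, 2*h, 3*h, 4*h}"
    by simp
  show thesis
  proof (rule that[OF \<kappa>])
    fix f :: "real \<times> real \<Rightarrow> real \<times> real" and g G :: "real \<Rightarrow> real"
    assume "\<And>s. indicator {s. ?\<gamma> s \<in> \<Omega>} s * g s = f (?\<gamma> s) \<bullet> square_loop_velocity h s"
      and "\<And>s. s \<notin> {0, h, 2*h, 3*h, 4*h} \<Longrightarrow> (G has_real_derivative g s) (at s)"
      and "\<And>s. continuous (at s) G" and "G 0 = G (4*h)"
    with has_integral_primitive_off_finite[OF corners] loop[of g G] square_loop_line_integral[OF h]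
    show "\<kappa> * (G tb - G ta) =
        integral {a1..a1+h} (\<lambda>x. fst (f (x, a2))) + integral {a2..a2+h} (\<lambda>y. snd (f (a1 + h, y)))
        - integral {a1..a1+h} (\<lambda>x. fst (f (x, a2 + h))) - integral {a2..a2+h} (\<lambda>y. snd (f (a1, y)))"
      by simp
  qed
qed

lemma cell_boundary_moment_identity:
  fixes \<Omega> :: "(real \<times> real) set" and xt :: "real \<times> real" and a1 a2 h :: real
  defines "B \<equiv> frontier ({a1..a1+h} \<times> {a2..a2+h})"
  assumes h: "0 < h" and "open \<Omega>"
    and two_points: "B \<inter> frontier \<Omega> = {} \<or> (\<exists>x y. B \<inter> frontier \<Omega> = {x, y})"
    and midpoint: "\<And>x y. B \<inter> frontier \<Omega> = {x, y} \<Longrightarrow> xt = (1/2) *\<^sub>R (x + y)"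
  shows "fst xt * (integral {a1..a1+h} (\<lambda>x. indicator \<Omega> (x, a2))
                     - integral {a1..a1+h} (\<lambda>x. indicator \<Omega> (x, a2 + h)))
       + snd xt * (integral {a2..a2+h} (\<lambda>y. indicator \<Omega> (a1 + h, y))
                     - integral {a2..a2+h} (\<lambda>y. indicator \<Omega> (a1, y)))
     = integral {a1..a1+h} (\<lambda>x. indicator \<Omega> (x, a2) * x)
       + integral {a2..a2+h} (\<lambda>y. indicator \<Omega> (a1 + h, y) * y)
       - integral {a1..a1+h} (\<lambda>x. indicator \<Omega> (x, a2 + h) * x)
       - integral {a2..a2+h} (\<lambda>y. indicator \<Omega> (a1, y) * y)"
proof -
  let ?\<gamma> = "square_loop a1 a2 h" and ?v = "square_loop_velocity h"
  obtain \<kappa> ta tb where \<kappa>: "\<kappa> = 0 \<or> B \<inter> frontier \<Omega> = {?\<gamma> ta, ?\<gamma> tb}"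
    and line_integral: "\<And>f g G. (\<And>s. indicator {s. ?\<gamma> s \<in> \<Omega>} s * g s = f (?\<gamma> s) \<bullet> ?v s) \<Longrightarrow>
           (\<And>s. s \<notin> {0, h, 2*h, 3*h, 4*h} \<Longrightarrow> (G has_real_derivative g s) (at s)) \<Longrightarrow>
           (\<And>s. continuous (at s) G) \<Longrightarrow> G 0 = G (4*h) \<Longrightarrow>
           \<kappa> * (G tb - G ta) =
             integral {a1..a1+h} (\<lambda>x. fst (f (x, a2))) + integral {a2..a2+h} (\<lambda>y. snd (f (a1 + h, y)))
             - integral {a1..a1+h} (\<lambda>x. fst (f (x, a2 + h))) - integral {a2..a2+h} (\<lambda>y. snd (f (a1, y)))"
    using square_loop_indicator_line_integrals[OF h assms(3) two_points[unfolded B_def]] unfolding B_def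
    by blast
  have horizontal: "\<kappa> * (fst (?\<gamma> tb) - fst (?\<gamma> ta)) =
      integral {a1..a1+h} (\<lambda>x. indicator \<Omega> (x, a2)) - integral {a1..a1+h} (\<lambda>x. indicator \<Omega> (x, a2 + h))"
    using line_integral[where f = "\<lambda>z. indicator \<Omega> z *\<^sub>R (1, 0)" and g = "\<lambda>s. fst (?v s)" and G = "\<lambda>s. fst (?\<gamma> s)"]
      square_loop_fst_deriv[OF h] square_loop_closed[OF h] continuous_square_loop
    by (simp add: inner_prod_def indicator_def continuous_fst)
  have vertical: "\<kappa> * (snd (?\<gamma> tb) - snd (?\<gamma> ta)) =
      integral {a2..a2+h} (\<lambda>y. indicator \<Omega> (a1 + h, y)) - integral {a2..a2+h} (\<lambda>y. indicator \<Omega> (a1, y))"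
    using line_integral[where f = "\<lambda>z. indicator \<Omega> z *\<^sub>R (0, 1)" and g = "\<lambda>s. snd (?v s)" and G = "\<lambda>s. snd (?\<gamma> s)"]
      square_loop_snd_deriv[OF h] square_loop_closed[OF h] continuous_square_loop
    by (simp add: inner_prod_def indicator_def continuous_snd)
  have moment: "\<kappa> * (norm (?\<gamma> tb)^2 / 2 - norm (?\<gamma> ta)^2 / 2) =
      integral {a1..a1+h} (\<lambda>x. indicator \<Omega> (x, a2) * x) + integral {a2..a2+h} (\<lambda>y. indicator \<Omega> (a1 + h, y) * y)
      - integral {a1..a1+h} (\<lambda>x. indicator \<Omega> (x, a2 + h) * x) - integral {a2..a2+h} (\<lambda>y. indicator \<Omega> (a1, y) * y)"
    using line_integral[where f = "\<lambda>z. indicator \<Omega> z *\<^sub>R z" and g = "\<lambda>s. ?\<gamma> s \<bullet> ?v s" and G = "\<lambda>s. norm (?\<gamma> s)^2 / 2"]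
      square_loop_sqnorm_deriv[OF h] square_loop_closed[OF h] continuous_square_loop
    by (simp add: indicator_def continuous_intros)
  have "fst xt * (\<kappa> * (fst (?\<gamma> tb) - fst (?\<gamma> ta))) + snd xt * (\<kappa> * (snd (?\<gamma> tb) - snd (?\<gamma> ta)))
          = \<kappa> * (xt \<bullet> (?\<gamma> tb - ?\<gamma> ta))"
    by (simp add: inner_prod_def algebra_simps)
  moreover have "\<kappa> * (xt \<bullet> (?\<gamma> tb - ?\<gamma> ta)) = \<kappa> * (norm (?\<gamma> tb)^2 / 2 - norm (?\<gamma> ta)^2 / 2)"
  proof (cases "\<kappa> = 0")
    case False
    then have "xt = (1/2) *\<^sub>R (?\<gamma> ta + ?\<gamma> tb)"
      using \<kappa> by (intro midpoint) simp
    then show ?thesis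
      by (simp add: inner_diff_right inner_add_left power2_norm_eq_inner inner_commute algebra_simps)
  qed simp
  ultimately show ?thesis
    unfolding horizontal vertical moment by (rule trans)
qed

section \<open>Cells and edges of the grid\<close>

lemma measure_preimage_eq_integral:
  fixes f :: "real \<Rightarrow> 'a::topological_space"
  assumes "\<And>t. continuous (at t) f" and "open \<Omega>"
  shows "measure lebesgue {t \<in> {a..b}. f t \<in> \<Omega>} = integral {a..b} (\<lambda>t. indicator \<Omega> (f t))"
proof -
  have "f -` \<Omega> \<in> sets lebesgue"
    using continuous_open_vimage[OF assms(2,1)] lebesgue_openin[of UNIV] by simp
  then have "f -` \<Omega> \<inter> {a..b} \<in> lmeasurable"
    by (intro bounded_set_imp_lmeasurable) (auto simp: bounded_Int)
  then have "integral {a..b} (indicator (f -` \<Omega>)) = measure lebesgue (f -` \<Omega> \<inter> {a..b})"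
    by (rule integral_indicator)
  moreover have "f -` \<Omega> \<inter> {a..b} = {t \<in> {a..b}. f t \<in> \<Omega>}"
    by auto
  moreover have "indicator (f -` \<Omega>) = (\<lambda>t. indicator \<Omega> (f t) :: real)"
    by (auto simp: indicator_def)
  ultimately show ?thesis
    by simp
qed

lemma Hx_times_h:
  assumes "0 < h" and "open \<Omega>"
  shows "Hx \<Omega> h i j * h = integral {(real_of_int j - 1/2) * h .. (real_of_int j + 1/2) * h}
                               (\<lambda>t. indicator \<Omega> ((real_of_int i + 1/2) * h, t))"
  using measure_preimage_eq_integral[of "Pair ((real_of_int i + 1/2) * h)" \<Omega>] assms
  by (simp add: Hx_def continuous_intros)

lemma Hy_times_h:
  assumes "0 < h" and "open \<Omega>"
  shows "Hy \<Omega> h i j * h = integral {(real_of_int i - 1/2) * h .. (real_of_int i + 1/2) * h}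
                               (\<lambda>t. indicator \<Omega> (t, (real_of_int j + 1/2) * h))"
  using measure_preimage_eq_integral[of "\<lambda>t. (t, (real_of_int j + 1/2) * h)" \<Omega>] assms
  by (simp add: Hy_def continuous_intros)

definition edge_moment_x :: "(real \<times> real) set \<Rightarrow> real \<Rightarrow> int \<Rightarrow> int \<Rightarrow> real" where
  "edge_moment_x \<Omega> h i j = integral {(real_of_int j - 1/2) * h .. (real_of_int j + 1/2) * h}
      (\<lambda>t. indicator \<Omega> ((real_of_int i + 1/2) * h, t) * t)"

definition edge_moment_y :: "(real \<times> real) set \<Rightarrow> real \<Rightarrow> int \<Rightarrow> int \<Rightarrow> real" where
  "edge_moment_y \<Omega> h i j = integral {(real_of_int i - 1/2) * h .. (real_of_int i + 1/2) * h}
      (\<lambda>t. indicator \<Omega> (t, (real_of_int j + 1/2) * h) * t)"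

lemma xtilde_eq_midpoint:
  assumes "frontier (cell h i j) \<inter> frontier \<Omega> = {x, y}"
  shows "xtilde \<Omega> h (i, j) = (1/2) *\<^sub>R (x + y)"
proof -
  define S where "S = frontier (cell h i j) \<inter> frontier \<Omega>"
  define P where "P = (\<lambda>(x', y'). S = {x', y'})"
  obtain x' y' where chosen: "(SOME p. P p) = (x', y')"
    by (cases "SOME p. P p") blast
  have "P (x, y)"
    using assms by (simp add: P_def S_def)
  then have "P (x', y')"
    using someI[of P] chosen by simp
  then have sum: "x' + y' = x + y"
    using assms by (auto simp: P_def S_def doubleton_eq_iff)
  have "\<exists>x y. S = {x, y}"
    using assms unfolding S_def by blast
  then have "xtilde \<Omega> h (i, j) = (case SOME p. P p of (x', y') \<Rightarrow> (1/2) *\<^sub>R (x' + y'))"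
    unfolding xtilde_def Let_def by (simp add: S_def[symmetric] P_def)
  then show ?thesis
    using chosen sum by simp
qed

lemma cross2_xtilde_GH:
  assumes h: "0 < h" and "open \<Omega>"
    and two_points: "frontier (cell h i j) \<inter> frontier \<Omega> = {} \<or>
                     (\<exists>x y. frontier (cell h i j) \<inter> frontier \<Omega> = {x, y})"
  shows "cross2 (xtilde \<Omega> h (i, j)) (GH \<Omega> h (i, j)) * h^2
           = (edge_moment_y \<Omega> h i j - edge_moment_y \<Omega> h i (j - 1))
             - (edge_moment_x \<Omega> h i j - edge_moment_x \<Omega> h (i - 1) j)"
proof -
  define a1 where "a1 = (real_of_int i - 1/2) * h"
  define a2 where "a2 = (real_of_int j - 1/2) * h"
  have i_coords: "(real_of_int i - 1/2) * h = a1" "(real_of_int i + 1/2) * h = a1 + h"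
    "(real_of_int (i - 1) + 1/2) * h = a1"
    by (simp_all add: a1_def algebra_simps)
  have j_coords: "(real_of_int j - 1/2) * h = a2" "(real_of_int j + 1/2) * h = a2 + h"
    "(real_of_int (j - 1) + 1/2) * h = a2"
    by (simp_all add: a2_def algebra_simps)
  have cell: "cell h i j = {a1..a1+h} \<times> {a2..a2+h}"
    unfolding cell_def i_coords j_coords ..
  have identity: "fst (xtilde \<Omega> h (i, j)) * (integral {a1..a1+h} (\<lambda>x. indicator \<Omega> (x, a2))
                     - integral {a1..a1+h} (\<lambda>x. indicator \<Omega> (x, a2 + h)))
       + snd (xtilde \<Omega> h (i, j)) * (integral {a2..a2+h} (\<lambda>y. indicator \<Omega> (a1 + h, y))
                     - integral {a2..a2+h} (\<lambda>y. indicator \<Omega> (a1, y)))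
     = integral {a1..a1+h} (\<lambda>x. indicator \<Omega> (x, a2) * x)
       + integral {a2..a2+h} (\<lambda>y. indicator \<Omega> (a1 + h, y) * y)
       - integral {a1..a1+h} (\<lambda>x. indicator \<Omega> (x, a2 + h) * x)
       - integral {a2..a2+h} (\<lambda>y. indicator \<Omega> (a1, y) * y)"
    using cell_boundary_moment_identity[OF h assms(2), of a1 a2 "xtilde \<Omega> h (i, j)"]
      two_points xtilde_eq_midpoint[of h i j \<Omega>] unfolding cell by blast
  have "cross2 (xtilde \<Omega> h (i, j)) (GH \<Omega> h (i, j)) * h^2
      = fst (xtilde \<Omega> h (i, j)) * (Hy \<Omega> h i j * h - Hy \<Omega> h i (j - 1) * h)
        - snd (xtilde \<Omega> h (i, j)) * (Hx \<Omega> h i j * h - Hx \<Omega> h (i - 1) j * h)"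
    using h by (simp add: cross2_def GH_def power2_eq_square field_simps)
  also have "\<dots> = (edge_moment_y \<Omega> h i j - edge_moment_y \<Omega> h i (j - 1))
             - (edge_moment_x \<Omega> h i j - edge_moment_x \<Omega> h (i - 1) j)"
    using identity
    unfolding Hx_times_h[OF h assms(2)] Hy_times_h[OF h assms(2)] edge_moment_x_def edge_moment_y_def
      i_coords j_coords
    by (simp add: algebra_simps)
  finally show ?thesis .
qed

lemma vertical_edge_support:
  assumes "0 < h" and "Hx \<Omega> h i j \<noteq> 0 \<or> edge_moment_x \<Omega> h i j \<noteq> 0"
  shows "(i, j) \<in> OmegaH \<Omega> h \<and> (i + 1, j) \<in> OmegaH \<Omega> h"
proof -
  define E where "E = {(real_of_int j - 1/2) * h .. (real_of_int j + 1/2) * h}"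
  have "\<exists>t\<in>E. ((real_of_int i + 1/2) * h, t) \<in> \<Omega>"
  proof (rule ccontr)
    assume none: "\<not> ?thesis"
    then have "{t \<in> E. ((real_of_int i + 1/2) * h, t) \<in> \<Omega>} = {}"
      by auto
    then have "Hx \<Omega> h i j = 0"
      unfolding Hx_def E_def[symmetric] by (simp only:) simp
    moreover have "edge_moment_x \<Omega> h i j = integral E (\<lambda>_. 0)"
      unfolding edge_moment_x_def E_def[symmetric] by (rule integral_cong) (use none in auto)
    ultimately show False
      using assms(2) by simp
  qed
  then obtain t where "t \<in> E" "((real_of_int i + 1/2) * h, t) \<in> \<Omega>"
    by blast
  moreover have "((real_of_int i + 1/2) * h, t) \<in> cell h i j \<inter> cell h (i + 1) j" if "t \<in> E"
    using that assms(1) by (auto simp: cell_def E_def algebra_simps)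
  ultimately show ?thesis
    unfolding OmegaH_def by blast
qed

lemma horizontal_edge_support:
  assumes "0 < h" and "Hy \<Omega> h i j \<noteq> 0 \<or> edge_moment_y \<Omega> h i j \<noteq> 0"
  shows "(i, j) \<in> OmegaH \<Omega> h \<and> (i, j + 1) \<in> OmegaH \<Omega> h"
proof -
  define E where "E = {(real_of_int i - 1/2) * h .. (real_of_int i + 1/2) * h}"
  have "\<exists>t\<in>E. (t, (real_of_int j + 1/2) * h) \<in> \<Omega>"
  proof (rule ccontr)
    assume none: "\<not> ?thesis"
    then have "{t \<in> E. (t, (real_of_int j + 1/2) * h) \<in> \<Omega>} = {}"
      by auto
    then have "Hy \<Omega> h i j = 0"
      unfolding Hy_def E_def[symmetric] by (simp only:) simp
    moreover have "edge_moment_y \<Omega> h i j = integral E (\<lambda>_. 0)"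
      unfolding edge_moment_y_def E_def[symmetric] by (rule integral_cong) (use none in auto)
    ultimately show False
      using assms(2) by simp
  qed
  then obtain t where "t \<in> E" "(t, (real_of_int j + 1/2) * h) \<in> \<Omega>"
    by blast
  moreover have "(t, (real_of_int j + 1/2) * h) \<in> cell h i j \<inter> cell h i (j + 1)" if "t \<in> E"
    using that assms(1) by (auto simp: cell_def E_def algebra_simps)
  ultimately show ?thesis
    unfolding OmegaH_def by blast
qed

lemma cell_index_bound:
  fixes h x R :: real and i :: int
  assumes "0 < h" and "\<bar>x\<bar> \<le> R"
    and "(real_of_int i - 1/2) * h \<le> x" and "x \<le> (real_of_int i + 1/2) * h"
  shows "\<bar>i\<bar> \<le> \<lceil>R / h\<rceil> + 1"
proof -
  have "real_of_int i * h - h/2 \<le> x" "x \<le> real_of_int i * h + h/2"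
    using assms(3,4) by (simp_all add: algebra_simps)
  then have "\<bar>real_of_int i * h\<bar> \<le> R + h"
    using assms(2) by (simp add: abs_le_iff)
  then have "\<bar>real_of_int i\<bar> \<le> R / h + 1"
    using assms(1) by (simp add: abs_mult field_simps)
  also have "\<dots> \<le> real_of_int (\<lceil>R / h\<rceil> + 1)"
    by simp
  finally show ?thesis
    by linarith
qed

lemma finite_OmegaH:
  assumes "bounded \<Omega>" and "0 < h"
  shows "finite (OmegaH \<Omega> h)"
proof -
  obtain R where R: "\<And>z. z \<in> \<Omega> \<Longrightarrow> norm z \<le> R"
    using assms(1) unfolding bounded_iff by blast
  define N where "N = \<lceil>R / h\<rceil> + 1"
  have "OmegaH \<Omega> h \<subseteq> {-N..N} \<times> {-N..N}"
  proof safe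
    fix i j
    assume "(i, j) \<in> OmegaH \<Omega> h"
    then obtain x y where xy: "(x, y) \<in> \<Omega>" "(x, y) \<in> cell h i j"
      unfolding OmegaH_def by auto
    have "norm x \<le> norm (x, y)" "norm y \<le> norm (x, y)"
      by (rule norm_fst_le, rule norm_snd_le)
    then have "\<bar>x\<bar> \<le> R" "\<bar>y\<bar> \<le> R"
      using R[OF xy(1)] by auto
    then have "\<bar>i\<bar> \<le> N" "\<bar>j\<bar> \<le> N"
      using cell_index_bound[OF assms(2)] xy(2) unfolding N_def cell_def by auto
    then show "i \<in> {-N..N}" "j \<in> {-N..N}"
      by auto
  qed
  then show ?thesis
    by (rule finite_subset) simp
qed

section \<open>Telescoping sums over the grid\<close>

lemma sum_shift_eq:
  fixes F :: "'a::ab_group_add \<Rightarrow> 'b::comm_monoid_add"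
  assumes "finite K" and "\<And>k. F k \<noteq> 0 \<Longrightarrow> k \<in> K \<and> k + d \<in> K"
  shows "(\<Sum>k\<in>K. F (k - d)) = (\<Sum>k\<in>K. F k)"
proof -
  have "(\<Sum>k\<in>K. F (k - d)) = (\<Sum>k\<in>(\<lambda>k. k - d) ` K. F k)"
    by (simp add: sum.reindex inj_on_def)
  also have "\<dots> = (\<Sum>k\<in>K \<union> (\<lambda>k. k - d) ` K. F k)"
    by (rule sum.mono_neutral_left) (use assms in \<open>force+\<close>)
  also have "\<dots> = (\<Sum>k\<in>K. F k)"
    by (rule sum.mono_neutral_right) (use assms in \<open>auto\<close>)
  finally show ?thesis .
qed

lemma sum_telescope_shift:
  fixes F :: "'a::ab_group_add \<Rightarrow> 'b::ab_group_add"
  assumes "finite K" and "\<And>k. F k \<noteq> 0 \<Longrightarrow> k \<in> K \<and> k + d \<in> K"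
  shows "(\<Sum>k\<in>K. F k - F (k - d)) = 0"
  using sum_shift_eq[of K F d] assms by (simp add: sum_subtractf)

lemma sum_by_parts_shift:
  fixes u w :: "'a::ab_group_add \<Rightarrow> 'b::comm_ring"
  assumes "finite K" and "\<And>k. u k \<noteq> 0 \<Longrightarrow> k \<in> K \<and> k + d \<in> K"
  shows "(\<Sum>k\<in>K. (u k - u (k - d)) * w k) = (\<Sum>k\<in>K. u k * (w k - w (k + d)))"
proof -
  have "(\<Sum>k\<in>K. u (k - d) * w (k - d + d)) = (\<Sum>k\<in>K. u k * w (k + d))"
    by (rule sum_shift_eq[OF assms(1), where F = "\<lambda>k. u k * w (k + d)"]) (use assms(2) in force)
  then show ?thesis
    by (simp add: algebra_simps sum_subtractf)
qed

lemma sum_GH_eq_0: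
  assumes "finite (OmegaH \<Omega> h)" and "0 < h"
  shows "(\<Sum>k\<in>OmegaH \<Omega> h. GH \<Omega> h k) = 0"
proof -
  have GH: "GH \<Omega> h k = ((case_prod (Hx \<Omega> h) k - case_prod (Hx \<Omega> h) (k - (1, 0))) / h,
                         (case_prod (Hy \<Omega> h) k - case_prod (Hy \<Omega> h) (k - (0, 1))) / h)" for k
    by (cases k) (simp add: GH_def)
  have "(\<Sum>k\<in>OmegaH \<Omega> h. case_prod (Hx \<Omega> h) k - case_prod (Hx \<Omega> h) (k - (1, 0))) = 0"
  proof (rule sum_telescope_shift[OF assms(1)])
    fix k :: "int \<times> int"
    assume "case_prod (Hx \<Omega> h) k \<noteq> 0"
    then show "k \<in> OmegaH \<Omega> h \<and> k + (1, 0) \<in> OmegaH \<Omega> h"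
      using vertical_edge_support[OF assms(2)] by (cases k) auto
  qed
  moreover have "(\<Sum>k\<in>OmegaH \<Omega> h. case_prod (Hy \<Omega> h) k - case_prod (Hy \<Omega> h) (k - (0, 1))) = 0"
  proof (rule sum_telescope_shift[OF assms(1)])
    fix k :: "int \<times> int"
    assume "case_prod (Hy \<Omega> h) k \<noteq> 0"
    then show "k \<in> OmegaH \<Omega> h \<and> k + (0, 1) \<in> OmegaH \<Omega> h"
      using horizontal_edge_support[OF assms(2)] by (cases k) auto
  qed
  ultimately show ?thesis
    by (simp add: GH prod_eq_iff fst_sum snd_sum sum_divide_distrib[symmetric])
qed

lemma sum_cross2_right: "(\<Sum>k\<in>K. cross2 a (f k)) = cross2 a (\<Sum>k\<in>K. f k)"
  by (simp add: cross2_def fst_sum snd_sum sum_distrib_left sum_subtractf)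

lemma sum_Jh_eq_0:
  assumes fin: "finite (OmegaH \<Omega> h)" and h: "0 < h" and "open \<Omega>"
    and two_points: "\<forall>(i, j)\<in>OmegaH \<Omega> h.
          frontier (cell h i j) \<inter> frontier \<Omega> = {} \<or>
          (\<exists>x y. frontier (cell h i j) \<inter> frontier \<Omega> = {x, y})"
  shows "(\<Sum>k\<in>OmegaH \<Omega> h. Jh \<Omega> h c k) = 0"
proof -
  define mx where "mx = case_prod (edge_moment_x \<Omega> h)"
  define my where "my = case_prod (edge_moment_y \<Omega> h)"
  have cross: "cross2 (xtilde \<Omega> h k) (GH \<Omega> h k)
      = ((my k - my (k - (0, 1))) - (mx k - mx (k - (1, 0)))) / h^2" if "k \<in> OmegaH \<Omega> h" for k
    using cross2_xtilde_GH[OF h assms(3)] two_points that h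
    by (cases k) (fastforce simp: mx_def my_def field_simps)
  have "(\<Sum>k\<in>OmegaH \<Omega> h. mx k - mx (k - (1, 0))) = 0"
  proof (rule sum_telescope_shift[OF fin])
    fix k :: "int \<times> int"
    assume "mx k \<noteq> 0"
    then show "k \<in> OmegaH \<Omega> h \<and> k + (1, 0) \<in> OmegaH \<Omega> h"
      using vertical_edge_support[OF h] by (cases k) (auto simp: mx_def)
  qed
  moreover have "(\<Sum>k\<in>OmegaH \<Omega> h. my k - my (k - (0, 1))) = 0"
  proof (rule sum_telescope_shift[OF fin])
    fix k :: "int \<times> int"
    assume "my k \<noteq> 0"
    then show "k \<in> OmegaH \<Omega> h \<and> k + (0, 1) \<in> OmegaH \<Omega> h"
      using horizontal_edge_support[OF h] by (cases k) (auto simp: my_def)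
  qed
  ultimately have "(\<Sum>k\<in>OmegaH \<Omega> h. cross2 (xtilde \<Omega> h k) (GH \<Omega> h k)) = 0"
    by (simp add: cross sum_divide_distrib[symmetric] sum_subtractf)
  moreover have "Jh \<Omega> h c k = cross2 (xtilde \<Omega> h k) (GH \<Omega> h k) - cross2 c (GH \<Omega> h k)" for k
    by (simp add: Jh_def cross2_def algebra_simps)
  ultimately show ?thesis
    using sum_GH_eq_0[OF fin h] by (simp add: sum_subtractf sum_cross2_right) (simp add: cross2_def)
qed

section \<open>Connectedness of the grid\<close>

lemma measure_open_slice_pos:
  fixes S :: "real set"
  assumes "open S" and "y \<in> S" and "lo \<le> y" "y \<le> hi" and "lo < hi"
  shows "0 < measure lebesgue {t \<in> {lo..hi}. t \<in> S}"
proof -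
  obtain r where r: "0 < r" "ball y r \<subseteq> S"
    using assms(1,2) open_contains_ball by blast
  define \<delta> where "\<delta> = min r (hi - lo) / 2"
  have \<delta>: "0 < \<delta>" "\<delta> < r" "2 * \<delta> \<le> hi - lo"
    using r assms(5) by (auto simp: \<delta>_def min_def)
  define a where "a = (if y + \<delta> \<le> hi then y else y - \<delta>)"
  have "{a..a + \<delta>} \<subseteq> {t \<in> {lo..hi}. t \<in> S}"
  proof
    fix t
    assume t: "t \<in> {a..a + \<delta>}"
    then have "t \<in> ball y r"
      using \<delta> by (auto simp: a_def dist_real_def split: if_splits)
    then show "t \<in> {t \<in> {lo..hi}. t \<in> S}"
      using r t \<delta> assms(3,4) by (auto simp: a_def split: if_splits)
  qed
  moreover have "{t \<in> {lo..hi}. t \<in> S} \<in> lmeasurable"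
  proof (rule bounded_set_imp_lmeasurable)
    have "S \<in> sets lebesgue"
      using lebesgue_openin[of UNIV S] assms(1) by simp
    moreover have "{lo..hi} \<in> sets lebesgue"
      by simp
    ultimately have "S \<inter> {lo..hi} \<in> sets lebesgue"
      by blast
    moreover have "{t \<in> {lo..hi}. t \<in> S} = S \<inter> {lo..hi}"
      by auto
    ultimately show "{t \<in> {lo..hi}. t \<in> S} \<in> sets lebesgue"
      by simp
    show "bounded {t \<in> {lo..hi}. t \<in> S}"
      by (rule bounded_subset[of "{lo..hi}"]) auto
  qed
  ultimately have "measure lebesgue {a..a + \<delta>} \<le> measure lebesgue {t \<in> {lo..hi}. t \<in> S}"
    by (intro measure_mono_fmeasurable) auto
  then show ?thesis
    using \<delta> by simp
qed

lemma Hx_pos_of_shared_point: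
  assumes h: "0 < h" and "open \<Omega>"
    and "(x, y) \<in> \<Omega>" "(x, y) \<in> cell h i j" "(x, y) \<in> cell h (i + 1) j"
  shows "0 < Hx \<Omega> h i j"
proof -
  have x: "x = (real_of_int i + 1/2) * h"
    using assms(4,5) by (auto simp: cell_def algebra_simps)
  have "open {t. (x, t) \<in> \<Omega>}"
    using continuous_open_vimage[OF assms(2), of "Pair x"] by (simp add: vimage_def continuous_intros)
  then have "0 < measure lebesgue {t \<in> {(real_of_int j - 1/2) * h .. (real_of_int j + 1/2) * h}. t \<in> {t. (x, t) \<in> \<Omega>}}"
    by (rule measure_open_slice_pos) (use assms(3,4) h in \<open>auto simp: cell_def\<close>)
  then show ?thesis
    unfolding Hx_def using h x by simp
qed

lemma Hy_pos_of_shared_point: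
  assumes h: "0 < h" and "open \<Omega>"
    and "(x, y) \<in> \<Omega>" "(x, y) \<in> cell h i j" "(x, y) \<in> cell h i (j + 1)"
  shows "0 < Hy \<Omega> h i j"
proof -
  have y: "y = (real_of_int j + 1/2) * h"
    using assms(4,5) by (auto simp: cell_def algebra_simps)
  have "open {t. (t, y) \<in> \<Omega>}"
    using continuous_open_vimage[OF assms(2), of "\<lambda>t. (t, y)"] by (simp add: vimage_def continuous_intros)
  then have "0 < measure lebesgue {t \<in> {(real_of_int i - 1/2) * h .. (real_of_int i + 1/2) * h}. t \<in> {t. (t, y) \<in> \<Omega>}}"
    by (rule measure_open_slice_pos) (use assms(3,4) h in \<open>auto simp: cell_def\<close>)
  then show ?thesis
    unfolding Hy_def using h y by simp
qed

lemma cell_indices_close: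
  fixes a b :: int
  assumes "0 < h" and "(real_of_int a - 1/2) * h \<le> x" and "x \<le> (real_of_int b + 1/2) * h"
  shows "a \<le> b + 1"
proof -
  have "(real_of_int a - 1/2) * h \<le> (real_of_int b + 1/2) * h"
    using assms(2,3) by linarith
  then have "real_of_int a \<le> real_of_int (b + 1)"
    using assms(1) by simp
  then show ?thesis
    by linarith
qed

lemma flat_grid_function_eq_on_shared_point:
  fixes p :: "int \<times> int \<Rightarrow> real"
  assumes h: "0 < h" and "open \<Omega>"
    and flat_x: "\<And>i j. 0 < Hx \<Omega> h i j \<Longrightarrow> p (i + 1, j) = p (i, j)"
    and flat_y: "\<And>i j. 0 < Hy \<Omega> h i j \<Longrightarrow> p (i, j + 1) = p (i, j)"
    and z: "(x, y) \<in> \<Omega>" "(x, y) \<in> cell h i1 j1" "(x, y) \<in> cell h i2 j2"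
  shows "p (i1, j1) = p (i2, j2)"
proof -
  have "i1 \<le> i2 + 1" "i2 \<le> i1 + 1" "j1 \<le> j2 + 1" "j2 \<le> j1 + 1"
    using cell_indices_close[OF h] z(2,3) by (auto simp: cell_def)
  have corner: "(x, y) \<in> cell h i2 j1"
    using z(2,3) by (auto simp: cell_def)
  have "p (i1, j1) = p (i2, j1)"
  proof -
    consider "i2 = i1" | "i2 = i1 + 1" | "i1 = i2 + 1"
      using \<open>i1 \<le> i2 + 1\<close> \<open>i2 \<le> i1 + 1\<close> by linarith
    then show ?thesis
    proof cases
      case 2
      then show ?thesis
        using flat_x Hx_pos_of_shared_point[OF h assms(2) z(1,2)] corner by metis
    next
      case 3
      then show ?thesis
        using flat_x Hx_pos_of_shared_point[OF h assms(2) z(1) corner] z(2) by metis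
    qed simp
  qed
  also have "\<dots> = p (i2, j2)"
  proof -
    consider "j2 = j1" | "j2 = j1 + 1" | "j1 = j2 + 1"
      using \<open>j1 \<le> j2 + 1\<close> \<open>j2 \<le> j1 + 1\<close> by linarith
    then show ?thesis
    proof cases
      case 2
      then show ?thesis
        using flat_y Hy_pos_of_shared_point[OF h assms(2) z(1) corner] z(3) by metis
    next
      case 3
      then show ?thesis
        using flat_y Hy_pos_of_shared_point[OF h assms(2) z(1,3)] corner by metis
    qed simp
  qed
  finally show ?thesis .
qed

lemma exists_cell:
  assumes "0 < h"
  shows "\<exists>i j. z \<in> cell h i j"
proof -
  have "\<exists>i::int. (real_of_int i - 1/2) * h \<le> t \<and> t \<le> (real_of_int i + 1/2) * h" for t
  proof
    let ?i = "\<lfloor>t / h + 1/2\<rfloor>"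
    have "real_of_int ?i - 1/2 \<le> t / h" "t / h \<le> real_of_int ?i + 1/2"
      by linarith+
    then show "(real_of_int ?i - 1/2) * h \<le> t \<and> t \<le> (real_of_int ?i + 1/2) * h"
      using assms by (simp add: field_simps)
  qed
  then obtain i j where "(real_of_int i - 1/2) * h \<le> fst z \<and> fst z \<le> (real_of_int i + 1/2) * h"
    and "(real_of_int j - 1/2) * h \<le> snd z \<and> snd z \<le> (real_of_int j + 1/2) * h"
    by meson
  then have "z \<in> cell h i j"
    by (simp add: cell_def mem_Times_iff)
  then show ?thesis
    by blast
qed

lemma flat_grid_function_constant:
  fixes p :: "int \<times> int \<Rightarrow> real"
  assumes h: "0 < h" and "open \<Omega>" and "connected \<Omega>" and "\<Omega> \<noteq> {}" and fin: "finite (OmegaH \<Omega> h)"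
    and flat_x: "\<And>i j. 0 < Hx \<Omega> h i j \<Longrightarrow> p (i + 1, j) = p (i, j)"
    and flat_y: "\<And>i j. 0 < Hy \<Omega> h i j \<Longrightarrow> p (i, j + 1) = p (i, j)"
  shows "\<exists>a. \<forall>k\<in>OmegaH \<Omega> h. p k = a"
proof -
  define C where "C = (\<lambda>(i, j). cell h i j)"
  have closed_C: "closed (C k)" for k
    by (cases k) (simp add: C_def cell_def closed_Times)
  have in_OmegaH: "k \<in> OmegaH \<Omega> h" if "z \<in> \<Omega>" "z \<in> C k" for z k
    using that by (cases k) (auto simp: OmegaH_def C_def)
  have same: "p k1 = p k2" if "z \<in> \<Omega>" "z \<in> C k1" "z \<in> C k2" for z k1 k2
  proof -
    obtain i1 j1 i2 j2 x y where "k1 = (i1, j1)" "k2 = (i2, j2)" "z = (x, y)"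
      by (metis surj_pair)
    then show ?thesis
      using flat_grid_function_eq_on_shared_point[OF h assms(2) flat_x flat_y, of x y i1 j1 i2 j2] that
      by (simp add: C_def)
  qed
  obtain z0 where "z0 \<in> \<Omega>"
    using assms(4) by blast
  moreover obtain i0 j0 where "z0 \<in> cell h i0 j0"
    using exists_cell[OF h] by blast
  ultimately have z0: "z0 \<in> \<Omega>" "z0 \<in> C (i0, j0)"
    by (auto simp: C_def)
  define a where "a = p (i0, j0)"
  define E1 where "E1 = \<Omega> \<inter> \<Union>(C ` {k \<in> OmegaH \<Omega> h. p k = a})"
  define E2 where "E2 = \<Omega> \<inter> \<Union>(C ` {k \<in> OmegaH \<Omega> h. p k \<noteq> a})"
  have "closedin (top_of_set \<Omega>) E1" "closedin (top_of_set \<Omega>) E2"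
    unfolding E1_def E2_def using fin closed_C
    by (auto intro!: closedin_closed_Int closed_Union)
  moreover have "\<Omega> \<subseteq> E1 \<union> E2"
  proof
    fix z
    assume "z \<in> \<Omega>"
    moreover obtain i j where "z \<in> C (i, j)"
      using exists_cell[OF h, of z] unfolding C_def by auto
    ultimately show "z \<in> E1 \<union> E2"
      using in_OmegaH unfolding E1_def E2_def by blast
  qed
  moreover have "E1 \<inter> E2 = {}"
    using same unfolding E1_def E2_def by blast
  moreover have "E1 \<noteq> {}"
    using z0 in_OmegaH unfolding E1_def a_def by blast
  ultimately have "E2 = {}"
    using assms(3) unfolding connected_closedin by blast
  then have "p k = a" if "k \<in> OmegaH \<Omega> h" for k
    using that unfolding E2_def OmegaH_def C_def by (cases k) auto
  then show ?thesis
    by blast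
qed

section \<open>The operator as a quadratic form\<close>

definition extend_by_zero :: "'a set \<Rightarrow> ('a \<Rightarrow> real) \<Rightarrow> 'a \<Rightarrow> real" where
  "extend_by_zero K p l = (if l \<in> K then p l else 0)"

definition grid_energy :: "(real \<times> real) set \<Rightarrow> real \<Rightarrow> real \<Rightarrow> (int \<times> int \<Rightarrow> real) \<Rightarrow> (int \<times> int \<Rightarrow> real) \<Rightarrow> real" where
  "grid_energy \<Omega> h \<rho> p q = (\<Sum>(i, j)\<in>OmegaH \<Omega> h.
     Hx \<Omega> h i j / \<rho> * Gx h p i j * Gx h q i j + Hy \<Omega> h i j / \<rho> * Gy h p i j * Gy h q i j)"

definition net_force :: "(real \<times> real) set \<Rightarrow> real \<Rightarrow> (int \<times> int \<Rightarrow> real) \<Rightarrow> real \<times> real" where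
  "net_force \<Omega> h p = (\<Sum>k\<in>OmegaH \<Omega> h. p k *\<^sub>R GH \<Omega> h k)"

definition net_torque :: "(real \<times> real) set \<Rightarrow> real \<Rightarrow> real \<times> real \<Rightarrow> (int \<times> int \<Rightarrow> real) \<Rightarrow> real" where
  "net_torque \<Omega> h c p = (\<Sum>k\<in>OmegaH \<Omega> h. p k * Jh \<Omega> h c k)"

lemma sum_neg_Dh_mult_eq_grid_energy:
  assumes fin: "finite (OmegaH \<Omega> h)" and h: "0 < h"
  shows "(\<Sum>k\<in>OmegaH \<Omega> h. - Dh h (\<lambda>i j. Hx \<Omega> h i j / \<rho> * Gx h p i j) (\<lambda>i j. Hy \<Omega> h i j / \<rho> * Gy h p i j) k * q k)
       = grid_energy \<Omega> h \<rho> p q"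
proof -
  define fx where "fx = (\<lambda>(i, j). Hx \<Omega> h i j / \<rho> * Gx h p i j)"
  define fy where "fy = (\<lambda>(i, j). Hy \<Omega> h i j / \<rho> * Gy h p i j)"
  have Dh: "Dh h (\<lambda>i j. Hx \<Omega> h i j / \<rho> * Gx h p i j) (\<lambda>i j. Hy \<Omega> h i j / \<rho> * Gy h p i j) k
      = (fx k - fx (k - (1, 0))) / h + (fy k - fy (k - (0, 1))) / h" for k
    by (cases k) (simp add: Dh_def fx_def fy_def)
  have x_parts: "(\<Sum>k\<in>OmegaH \<Omega> h. (fx k - fx (k - (1, 0))) * q k)
      = (\<Sum>k\<in>OmegaH \<Omega> h. fx k * (q k - q (k + (1, 0))))"
  proof (rule sum_by_parts_shift[OF fin])
    fix k :: "int \<times> int"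
    assume "fx k \<noteq> 0"
    then show "k \<in> OmegaH \<Omega> h \<and> k + (1, 0) \<in> OmegaH \<Omega> h"
      using vertical_edge_support[OF h] by (cases k) (auto simp: fx_def)
  qed
  have y_parts: "(\<Sum>k\<in>OmegaH \<Omega> h. (fy k - fy (k - (0, 1))) * q k)
      = (\<Sum>k\<in>OmegaH \<Omega> h. fy k * (q k - q (k + (0, 1))))"
  proof (rule sum_by_parts_shift[OF fin])
    fix k :: "int \<times> int"
    assume "fy k \<noteq> 0"
    then show "k \<in> OmegaH \<Omega> h \<and> k + (0, 1) \<in> OmegaH \<Omega> h"
      using horizontal_edge_support[OF h] by (cases k) (auto simp: fy_def)
  qed
  have "(\<Sum>k\<in>OmegaH \<Omega> h. - Dh h (\<lambda>i j. Hx \<Omega> h i j / \<rho> * Gx h p i j) (\<lambda>i j. Hy \<Omega> h i j / \<rho> * Gy h p i j) k * q k)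
      = (\<Sum>k\<in>OmegaH \<Omega> h. - ((fx k - fx (k - (1, 0))) * q k) / h - ((fy k - fy (k - (0, 1))) * q k) / h)"
    unfolding Dh by (rule sum.cong) (simp_all add: algebra_simps diff_divide_distrib add_divide_distrib)
  also have "\<dots> = - (\<Sum>k\<in>OmegaH \<Omega> h. (fx k - fx (k - (1, 0))) * q k) / h
        - (\<Sum>k\<in>OmegaH \<Omega> h. (fy k - fy (k - (0, 1))) * q k) / h"
    by (simp add: sum_subtractf sum_divide_distrib sum_negf)
  also have "\<dots> = (\<Sum>k\<in>OmegaH \<Omega> h. - (fx k * (q k - q (k + (1, 0)))) / h - (fy k * (q k - q (k + (0, 1)))) / h)"
    unfolding x_parts y_parts by (simp add: sum_subtractf sum_divide_distrib sum_negf)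
  also have "\<dots> = grid_energy \<Omega> h \<rho> p q"
    unfolding grid_energy_def
    by (rule sum.cong) (auto simp: fx_def fy_def Gx_def Gy_def algebra_simps diff_divide_distrib)
  finally show ?thesis .
qed

lemma Lh_eq:
  "Lh \<Omega> h \<rho> m II c p k =
     - Dh h (\<lambda>i j. Hx \<Omega> h i j / \<rho> * Gx h (extend_by_zero (OmegaH \<Omega> h) p) i j)
            (\<lambda>i j. Hy \<Omega> h i j / \<rho> * Gy h (extend_by_zero (OmegaH \<Omega> h) p) i j) k
     + h^2 / m * (GH \<Omega> h k \<bullet> net_force \<Omega> h p) + h^2 / II * (Jh \<Omega> h c k * net_torque \<Omega> h c p)"
proof -
  have force: "(\<Sum>l\<in>OmegaH \<Omega> h. (extend_by_zero (OmegaH \<Omega> h) p l * h^2) *\<^sub>R GH \<Omega> h l)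
      = h^2 *\<^sub>R net_force \<Omega> h p"
    by (simp add: net_force_def extend_by_zero_def scaleR_sum_right mult.commute)
  have torque: "(\<Sum>l\<in>OmegaH \<Omega> h. extend_by_zero (OmegaH \<Omega> h) p l * Jh \<Omega> h c l * h^2)
      = h^2 * net_torque \<Omega> h c p"
    by (simp add: net_torque_def extend_by_zero_def sum_distrib_left algebra_simps)
  show ?thesis
    unfolding Lh_def Let_def extend_by_zero_def[symmetric] force torque
    by (simp add: dot2_def inner_prod_def algebra_simps)
qed

lemma sum_Lh_mult:
  assumes "finite (OmegaH \<Omega> h)" and "0 < h"
  shows "(\<Sum>k\<in>OmegaH \<Omega> h. Lh \<Omega> h \<rho> m II c p k * q k)
       = grid_energy \<Omega> h \<rho> (extend_by_zero (OmegaH \<Omega> h) p) (extend_by_zero (OmegaH \<Omega> h) q)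
         + h^2 / m * (net_force \<Omega> h p \<bullet> net_force \<Omega> h q)
         + h^2 / II * (net_torque \<Omega> h c p * net_torque \<Omega> h c q)"
proof -
  let ?q = "extend_by_zero (OmegaH \<Omega> h) q"
  have "(\<Sum>k\<in>OmegaH \<Omega> h. Lh \<Omega> h \<rho> m II c p k * q k) = (\<Sum>k\<in>OmegaH \<Omega> h. Lh \<Omega> h \<rho> m II c p k * ?q k)"
    by (simp add: extend_by_zero_def)
  also have "\<dots> = grid_energy \<Omega> h \<rho> (extend_by_zero (OmegaH \<Omega> h) p) ?q
      + h^2 / m * (net_force \<Omega> h p \<bullet> (\<Sum>k\<in>OmegaH \<Omega> h. ?q k *\<^sub>R GH \<Omega> h k))
      + h^2 / II * (net_torque \<Omega> h c p * (\<Sum>k\<in>OmegaH \<Omega> h. ?q k * Jh \<Omega> h c k))"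
    unfolding Lh_eq sum_neg_Dh_mult_eq_grid_energy[OF assms, symmetric]
    by (simp add: algebra_simps sum.distrib sum_subtractf sum_negf sum_distrib_left inner_sum_right inner_commute)
  also have "(\<Sum>k\<in>OmegaH \<Omega> h. ?q k *\<^sub>R GH \<Omega> h k) = net_force \<Omega> h q"
    by (simp add: net_force_def extend_by_zero_def)
  also have "(\<Sum>k\<in>OmegaH \<Omega> h. ?q k * Jh \<Omega> h c k) = net_torque \<Omega> h c q"
    by (simp add: net_torque_def extend_by_zero_def)
  finally show ?thesis .
qed

lemma grid_energy_sym: "grid_energy \<Omega> h \<rho> p q = grid_energy \<Omega> h \<rho> q p"
  unfolding grid_energy_def by (simp add: algebra_simps)

lemma grid_energy_term_nonneg:
  assumes "0 < h" and "0 < \<rho>"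
  shows "0 \<le> Hx \<Omega> h i j / \<rho> * Gx h p i j * Gx h p i j"
    and "0 \<le> Hy \<Omega> h i j / \<rho> * Gy h p i j * Gy h p i j"
proof -
  have "0 \<le> Hx \<Omega> h i j / \<rho>" "0 \<le> Hy \<Omega> h i j / \<rho>"
    using assms by (simp_all add: Hx_def Hy_def)
  then show "0 \<le> Hx \<Omega> h i j / \<rho> * Gx h p i j * Gx h p i j"
    and "0 \<le> Hy \<Omega> h i j / \<rho> * Gy h p i j * Gy h p i j"
    by (metis mult.assoc mult_nonneg_nonneg zero_le_square)+
qed

lemma grid_energy_nonneg:
  assumes "0 < h" and "0 < \<rho>"
  shows "0 \<le> grid_energy \<Omega> h \<rho> p p"
  unfolding grid_energy_def
  by (rule sum_nonneg) (use grid_energy_term_nonneg[OF assms] in \<open>auto intro: add_nonneg_nonneg\<close>)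

lemma Lh_symmetric:
  assumes "finite (OmegaH \<Omega> h)" and "0 < h"
  shows "(\<Sum>k\<in>OmegaH \<Omega> h. Lh \<Omega> h \<rho> m II c p k * q k) = (\<Sum>k\<in>OmegaH \<Omega> h. p k * Lh \<Omega> h \<rho> m II c q k)"
  using sum_Lh_mult[OF assms, of \<rho> m II c p q] sum_Lh_mult[OF assms, of \<rho> m II c q p]
  by (simp add: grid_energy_sym inner_commute mult.commute)

lemma Lh_nonneg:
  assumes "finite (OmegaH \<Omega> h)" and "0 < h" and "0 < \<rho>" and "0 < m" and "0 < II"
  shows "0 \<le> (\<Sum>k\<in>OmegaH \<Omega> h. Lh \<Omega> h \<rho> m II c p k * p k)"
  unfolding sum_Lh_mult[OF assms(1,2)]
  using grid_energy_nonneg[OF assms(2,3)] assms(4,5) by (intro add_nonneg_nonneg) auto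

lemma grid_energy_eq_0_imp_flat:
  assumes "finite (OmegaH \<Omega> h)" and "0 < h" and "0 < \<rho>" and "grid_energy \<Omega> h \<rho> p p = 0"
  shows "Hx \<Omega> h i j > 0 \<Longrightarrow> p (i + 1, j) = p (i, j)"
    and "Hy \<Omega> h i j > 0 \<Longrightarrow> p (i, j + 1) = p (i, j)"
proof -
  note nonneg = grid_energy_term_nonneg[OF assms(2,3)]
  have "\<forall>k\<in>OmegaH \<Omega> h. (case k of (i, j) \<Rightarrow>
          Hx \<Omega> h i j / \<rho> * Gx h p i j * Gx h p i j + Hy \<Omega> h i j / \<rho> * Gy h p i j * Gy h p i j) = 0"
    using assms(4) add_nonneg_nonneg[OF nonneg] unfolding grid_energy_def
    by (subst (asm) sum_nonneg_eq_0_iff[OF assms(1)]) auto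
  then have terms: "Hx \<Omega> h i j / \<rho> * Gx h p i j * Gx h p i j + Hy \<Omega> h i j / \<rho> * Gy h p i j * Gy h p i j = 0"
    if "(i, j) \<in> OmegaH \<Omega> h" for i j
    using that by fastforce
  show "p (i + 1, j) = p (i, j)" if "Hx \<Omega> h i j > 0"
  proof -
    have "(i, j) \<in> OmegaH \<Omega> h"
      using vertical_edge_support[OF assms(2)] that by auto
    then have "Hx \<Omega> h i j / \<rho> * Gx h p i j * Gx h p i j = 0"
      using terms nonneg by (smt (verit))
    then show ?thesis
      using that assms(2,3) by (simp add: Gx_def)
  qed
  show "p (i, j + 1) = p (i, j)" if "Hy \<Omega> h i j > 0"
  proof -
    have "(i, j) \<in> OmegaH \<Omega> h"
      using horizontal_edge_support[OF assms(2)] that by auto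
    then have "Hy \<Omega> h i j / \<rho> * Gy h p i j * Gy h p i j = 0"
      using terms nonneg by (smt (verit))
    then show ?thesis
      using that assms(2,3) by (simp add: Gy_def)
  qed
qed

lemma Lh_kernel_imp_constant:
  assumes fin: "finite (OmegaH \<Omega> h)" and h: "0 < h" and "0 < \<rho>" and "0 < m" and "0 < II"
    and "open \<Omega>" and "connected \<Omega>" and "\<Omega> \<noteq> {}"
    and kernel: "\<forall>k\<in>OmegaH \<Omega> h. Lh \<Omega> h \<rho> m II c p k = 0"
  shows "\<exists>a. \<forall>k\<in>OmegaH \<Omega> h. p k = a"
proof -
  let ?p = "extend_by_zero (OmegaH \<Omega> h) p"
  have "0 = (\<Sum>k\<in>OmegaH \<Omega> h. Lh \<Omega> h \<rho> m II c p k * p k)"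
    using kernel by simp
  also have "\<dots> = grid_energy \<Omega> h \<rho> ?p ?p
      + h^2 / m * (net_force \<Omega> h p \<bullet> net_force \<Omega> h p) + h^2 / II * (net_torque \<Omega> h c p)^2"
    by (simp add: sum_Lh_mult[OF fin h] power2_eq_square)
  finally have "grid_energy \<Omega> h \<rho> ?p ?p = 0"
    using grid_energy_nonneg[OF h assms(3), of \<Omega> ?p] assms(4,5)
    by (smt (verit) divide_nonneg_pos inner_ge_zero mult_nonneg_nonneg zero_le_power2)
  note flat = grid_energy_eq_0_imp_flat[OF fin h assms(3) this]
  obtain a where "\<forall>k\<in>OmegaH \<Omega> h. ?p k = a"
    using flat_grid_function_constant[OF h assms(6-8) fin flat] by blast
  then show ?thesis
    by (auto simp: extend_by_zero_def)
qed

lemma constant_imp_Lh_kernel: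
  assumes fin: "finite (OmegaH \<Omega> h)" and h: "0 < h" and "open \<Omega>"
    and two_points: "\<forall>(i, j)\<in>OmegaH \<Omega> h.
          frontier (cell h i j) \<inter> frontier \<Omega> = {} \<or>
          (\<exists>x y. frontier (cell h i j) \<inter> frontier \<Omega> = {x, y})"
    and const: "\<forall>k\<in>OmegaH \<Omega> h. p k = a"
  shows "\<forall>k\<in>OmegaH \<Omega> h. Lh \<Omega> h \<rho> m II c p k = 0"
proof -
  let ?p = "extend_by_zero (OmegaH \<Omega> h) p"
  have no_flux_x: "(\<lambda>i j. Hx \<Omega> h i j / \<rho> * Gx h ?p i j) = (\<lambda>i j. 0)"
    using vertical_edge_support[OF h, of \<Omega>] const by (fastforce simp: Gx_def extend_by_zero_def)
  have no_flux_y: "(\<lambda>i j. Hy \<Omega> h i j / \<rho> * Gy h ?p i j) = (\<lambda>i j. 0)"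
    using horizontal_edge_support[OF h, of \<Omega>] const by (fastforce simp: Gy_def extend_by_zero_def)
  have "net_force \<Omega> h p = a *\<^sub>R (\<Sum>k\<in>OmegaH \<Omega> h. GH \<Omega> h k)"
    using const by (simp add: net_force_def scaleR_sum_right)
  then have "net_force \<Omega> h p = 0"
    using sum_GH_eq_0[OF fin h] by simp
  moreover have "net_torque \<Omega> h c p = a * (\<Sum>k\<in>OmegaH \<Omega> h. Jh \<Omega> h c k)"
    using const by (simp add: net_torque_def sum_distrib_left)
  then have "net_torque \<Omega> h c p = 0"
    using sum_Jh_eq_0[OF fin h assms(3) two_points] by simp
  ultimately show ?thesis
    unfolding Lh_eq no_flux_x no_flux_y by (simp add: Dh_def split: prod.split)
qed

theorem lemma4p6:
  fixes \<Omega> :: "(real \<times> real) set" and h \<rho> m II :: real and c :: "real \<times> real"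
  assumes "open \<Omega>" and "connected \<Omega>" and "\<Omega> \<noteq> {}" and "bounded \<Omega>"
    and "h > 0" and "\<rho> > 0" and "m > 0" and "II > 0"
    and xtilde_defined: "\<forall>(i, j)\<in>OmegaH \<Omega> h.
          frontier (cell h i j) \<inter> frontier \<Omega> = {} \<or>
          (\<exists>x y. frontier (cell h i j) \<inter> frontier \<Omega> = {x, y})"
  shows "(\<forall>p q. (\<Sum>k\<in>OmegaH \<Omega> h. Lh \<Omega> h \<rho> m II c p k * q k)
               = (\<Sum>k\<in>OmegaH \<Omega> h. p k * Lh \<Omega> h \<rho> m II c q k))
       \<and> (\<forall>p. 0 \<le> (\<Sum>k\<in>OmegaH \<Omega> h. Lh \<Omega> h \<rho> m II c p k * p k))
       \<and> (\<forall>p. (\<forall>k\<in>OmegaH \<Omega> h. Lh \<Omega> h \<rho> m II c p k = 0)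
               \<longleftrightarrow> (\<exists>a::real. \<forall>k\<in>OmegaH \<Omega> h. p k = a))"
proof -
  have fin: "finite (OmegaH \<Omega> h)"
    using finite_OmegaH assms(4,5) by blast
  have kernel: "(\<forall>k\<in>OmegaH \<Omega> h. Lh \<Omega> h \<rho> m II c p k = 0) \<longleftrightarrow> (\<exists>a. \<forall>k\<in>OmegaH \<Omega> h. p k = a)" for p
    using Lh_kernel_imp_constant[OF fin assms(5-8,1-3)] constant_imp_Lh_kernel[OF fin assms(5,1) xtilde_defined]
    by blast
  show ?thesis
    using Lh_symmetric[OF fin assms(5)] Lh_nonneg[OF fin assms(5-8)] kernel by blast
qed

end
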